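(* The norm $A\mapsto n\,\omega(A)$ is the minimum element of the class of $M$-norms $\||\cdot\||$ on $\mathbb{M}_n$ satisfying $\|A\|_1\le\||A\||$ for all $A\in\mathbb{M}_n$.
   Context: $\mathbb{M}_n$ is the algebra of complex $n\times n$ matrices with identity $I$; $\|A\|_1=\mathrm{Tr}(|A|)$ is the trace norm and $\omega(A)=\sup\{|\langle x,Ax\rangle|:\|x\|=1\}$ the numerical radius. A norm $\||\cdot\||$ on $\mathbb{M}_n$ is an $M$-norm if $\left\||\sum_{i=1}^k C_i^*X_iC_i\right\||\le \max_{i}\||X_i\||$ for all $k$, all $X_i$ and all $C_i$ with $\sum_{i=1}^k C_i^*C_i=I$. *)

theory Defs
  imports "HOL-Analysis.Analysis"
begin

text \<open>Complex n x n matrices are modelled as complex^'n^'n, with n = CARD('n).\<close>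

definition cadj :: "complex^'n^'n \<Rightarrow> complex^'n^'n" where
  "cadj A = (\<chi> i j. cnj (A $ j $ i))"

definition cinner :: "complex^'n \<Rightarrow> complex^'n \<Rightarrow> complex" where
  "cinner x y = (\<Sum>i\<in>UNIV. cnj (x $ i) * y $ i)"

definition psd :: "complex^'n^'n \<Rightarrow> bool" where
  "psd P \<longleftrightarrow> cadj P = P \<and> (\<forall>x. Im (cinner x (P *v x)) = 0 \<and> 0 \<le> Re (cinner x (P *v x)))"

definition mabs :: "complex^'n^'n \<Rightarrow> complex^'n^'n" where
  "mabs A = (THE P. psd P \<and> P ** P = cadj A ** A)"

definition trace_norm :: "complex^'n^'n \<Rightarrow> real" where
  "trace_norm A = Re (trace (mabs A))"

definition numrad :: "complex^'n^'n \<Rightarrow> real" where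
  "numrad A = (SUP x\<in>{x::complex^'n. norm x = 1}. cmod (cinner x (A *v x)))"

definition is_matrix_norm :: "(complex^'n^'n \<Rightarrow> real) \<Rightarrow> bool" where
  "is_matrix_norm N \<longleftrightarrow>
     (\<forall>A. 0 \<le> N A) \<and> (\<forall>A. N A = 0 \<longleftrightarrow> A = 0) \<and>
     (\<forall>c::complex. \<forall>A. N (\<chi> i j. c * A $ i $ j) = cmod c * N A) \<and>
     (\<forall>A B. N (A + B) \<le> N A + N B)"

definition is_M_norm :: "(complex^'n^'n \<Rightarrow> real) \<Rightarrow> bool" where
  "is_M_norm N \<longleftrightarrow> is_matrix_norm N \<and>
     (\<forall>(k::nat) (X::nat \<Rightarrow> complex^'n^'n) (C::nat \<Rightarrow> complex^'n^'n).
        (\<Sum>i<k. cadj (C i) ** C i) = mat 1 \<longrightarrow>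
        N (\<Sum>i<k. cadj (C i) ** X i ** C i) \<le> Max ((\<lambda>i. N (X i)) ` {..<k}))"

end

theory Submission
  imports Defs
begin

text \<open>
  Upper bound: by the polar decomposition, \<open>\<parallel>A\<parallel>\<^sub>1 = tr (U A)\<close> for a unitary \<open>U\<close>;
  diagonalising \<open>U\<^sup>*\<close> in an orthonormal basis \<open>w\<^sub>k\<close> with unimodular eigenvalues \<open>\<mu>\<^sub>k\<close> gives
  \<open>tr (U A) = \<Sum> cnj \<mu>\<^sub>k \<langle>w\<^sub>k, A w\<^sub>k\<rangle>\<close>, hence \<open>\<parallel>A\<parallel>\<^sub>1 \<le> n \<omega>(A)\<close>.
  M-norm: \<open>\<langle>x, (\<Sum> C\<^sub>i\<^sup>* X\<^sub>i C\<^sub>i) x\<rangle> = \<Sum> \<langle>C\<^sub>i x, X\<^sub>i C\<^sub>i x\<rangle>\<close> with \<open>\<Sum> \<parallel>C\<^sub>i x\<parallel>\<^sup>2 = \<parallel>x\<parallel>\<^sup>2\<close>.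
  Minimality: for a unit vector \<open>x\<close>, the \<open>n\<close> matrices \<open>C\<^sub>j\<close> whose \<open>j\<close>-th column is \<open>x\<close> and whose
  other columns vanish satisfy \<open>\<Sum> C\<^sub>j\<^sup>* C\<^sub>j = I\<close> and \<open>\<Sum> C\<^sub>j\<^sup>* A C\<^sub>j = \<langle>x, A x\<rangle> I\<close>, so an M-norm
  dominating the trace norm satisfies \<open>N A \<ge> N (\<langle>x, A x\<rangle> I) \<ge> \<parallel>\<langle>x, A x\<rangle> I\<parallel>\<^sub>1 = n |\<langle>x, A x\<rangle>|\<close>.
  The spectral theorem for normal matrices is proved variationally: a maximiser of
  \<open>\<langle>x, H x\<rangle>\<close> on the unit sphere is an eigenvector of a Hermitian \<open>H\<close>.
\<close>

section \<open>The standard inner product and the adjoint\<close>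

lemma cinner_add_right: "cinner x (y + z) = cinner x y + cinner x z"
  by (simp add: cinner_def distrib_left sum.distrib)

lemma cinner_add_left: "cinner (x + y) z = cinner x z + cinner y z"
  by (simp add: cinner_def distrib_right sum.distrib)

lemma cinner_diff_right: "cinner x (y - z) = cinner x y - cinner x z"
  by (simp add: cinner_def right_diff_distrib sum_subtractf)

lemma cinner_diff_left: "cinner (x - y) z = cinner x z - cinner y z"
  by (simp add: cinner_def left_diff_distrib sum_subtractf)

lemma cinner_minus_right: "cinner x (- y) = - cinner x y"
  by (simp add: cinner_def sum_negf)

lemma cinner_scale_right: "cinner x (c *s y) = c * cinner x y"
  by (simp add: cinner_def sum_distrib_left algebra_simps)

lemma cinner_scale_left: "cinner (c *s x) y = cnj c * cinner x y"
  by (simp add: cinner_def sum_distrib_left algebra_simps)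

lemma cinner_zero_right [simp]: "cinner x 0 = 0"
  by (simp add: cinner_def)

lemma cinner_zero_left [simp]: "cinner 0 x = 0"
  by (simp add: cinner_def)

lemma cinner_sum_right: "cinner x (sum f S) = (\<Sum>i\<in>S. cinner x (f i))"
  by (simp add: cinner_def sum_distrib_left sum.swap[of _ S])

lemma cinner_commute: "cinner y x = cnj (cinner x y)"
  by (simp add: cinner_def mult.commute)

lemma Re_cinner: "Re (cinner x y) = inner x y"
  by (simp add: cinner_def inner_vec_def inner_complex_def Re_sum)

lemma cinner_self: "cinner x x = complex_of_real ((norm x)\<^sup>2)"
proof -
  have "Im (cinner x x) = 0"
    by (simp add: cinner_def Im_sum)
  moreover have "Re (cinner x x) = (norm x)\<^sup>2"
    by (simp add: Re_cinner power2_norm_eq_inner)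
  ultimately show ?thesis
    by (simp add: complex_eq_iff)
qed

lemma cinner_self_eq_0 [simp]: "cinner x x = 0 \<longleftrightarrow> x = 0"
  by (simp add: cinner_self)

lemma cinner_self_eq_1_iff: "cinner x x = 1 \<longleftrightarrow> norm x = 1"
proof -
  have "cinner x x = 1 \<longleftrightarrow> (norm x)\<^sup>2 = 1"
    unfolding cinner_self by (simp only: of_real_eq_1_iff)
  then show ?thesis
    using norm_ge_zero[of x] by (auto simp: power2_eq_1_iff)
qed

lemma cmod_eq_1_iff: "cmod z = 1 \<longleftrightarrow> cnj z * z = 1"
proof -
  have "cnj z * z = complex_of_real ((cmod z)\<^sup>2)"
    by (simp only: complex_norm_square) (rule mult.commute)
  then have "cnj z * z = 1 \<longleftrightarrow> (cmod z)\<^sup>2 = 1"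
    by (simp only: of_real_eq_1_iff)
  then show ?thesis
    using abs_square_eq_1[of "cmod z"] by simp
qed

lemma norm_cscale: "norm (c *s (x::complex^'n)) = cmod c * norm x"
  by (simp add: norm_vec_def norm_mult L2_set_right_distrib)

lemma scaleR_cvec: "r *\<^sub>R (x::complex^'n) = complex_of_real r *s x"
  by (simp add: vec_eq_iff) (simp add: scaleR_conv_of_real)

lemma cinner_cauchy_schwarz: "cmod (cinner x y) \<le> norm x * norm y"
proof (cases "cinner x y = 0")
  case True
  then show ?thesis by simp
next
  case False
  define c where "c = cinner x y"
  define p where "p = cnj c / complex_of_real (cmod c)"
  have "cmod p = 1"
    using False by (simp add: p_def c_def norm_divide)
  have "p * c = complex_of_real (cmod c)"
    using False complex_norm_square[of c]
    by (simp add: p_def c_def power2_eq_square field_simps)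
  then have "cmod c = inner x (p *s y)"
    using Re_cinner[of x "p *s y"] by (simp add: cinner_scale_right c_def)
  also have "\<dots> \<le> norm x * norm y"
    using norm_cauchy_schwarz[of x "p *s y"] by (simp add: norm_cscale \<open>cmod p = 1\<close>)
  finally show ?thesis
    by (simp add: c_def)
qed

lemma cadj_cadj [simp]: "cadj (cadj A) = A"
  by (simp add: cadj_def vec_eq_iff)

lemma cadj_mult: "cadj (A ** B) = cadj B ** cadj A"
  by (simp add: cadj_def vec_eq_iff matrix_matrix_mult_def mult.commute)

lemma cadj_add: "cadj (A + B) = cadj A + cadj B"
  by (simp add: cadj_def vec_eq_iff)

lemma cadj_diff: "cadj (A - B) = cadj A - cadj B"
  by (simp add: cadj_def vec_eq_iff)

lemma cadj_mat [simp]: "cadj (mat c) = mat (cnj c)"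
  by (simp add: cadj_def vec_eq_iff mat_def)

lemma cinner_adj_right: "cinner x (M *v y) = cinner (cadj M *v x) y"
proof -
  have "cinner x (M *v y) = (\<Sum>i\<in>UNIV. \<Sum>j\<in>UNIV. cnj (x$i) * (M$i$j * y$j))"
    by (simp add: cinner_def matrix_vector_mult_def sum_distrib_left)
  also have "\<dots> = (\<Sum>j\<in>UNIV. \<Sum>i\<in>UNIV. cnj (x$i) * (M$i$j * y$j))"
    by (rule sum.swap)
  also have "\<dots> = cinner (cadj M *v x) y"
    by (simp add: cinner_def matrix_vector_mult_def cadj_def sum_distrib_right
        sum_distrib_left cnj_sum mult_ac)
  finally show ?thesis .
qed

lemma cinner_adj_left: "cinner (M *v x) y = cinner x (cadj M *v y)"
  by (simp add: cinner_adj_right)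

lemma mat_vector_mult: "(mat c :: complex^'n^'n) *v x = c *s x"
  by (simp add: vec_eq_iff matrix_vector_mult_def mat_def if_distrib[of "\<lambda>a. a * _"] cong: if_cong)

section \<open>Orthonormal families and unitary matrices\<close>

definition orthonormal_on :: "'n set \<Rightarrow> ('n \<Rightarrow> complex^'n) \<Rightarrow> bool" where
  "orthonormal_on F u \<longleftrightarrow> (\<forall>i\<in>F. \<forall>j\<in>F. cinner (u i) (u j) = (if i = j then 1 else 0))"

lemma orthonormal_on_norm: "orthonormal_on F u \<Longrightarrow> j \<in> F \<Longrightarrow> norm (u j) = 1"
  by (simp add: orthonormal_on_def flip: cinner_self_eq_1_iff)

lemma orthonormal_on_axis: "orthonormal_on UNIV (\<lambda>j. axis j 1 :: complex^'n)"
  by (auto simp: orthonormal_on_def cinner_def axis_def if_distrib[of "\<lambda>a. _ * a"] cong: if_cong)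

lemma exists_orthogonal_vector:
  fixes u :: "'k \<Rightarrow> complex^'n"
  assumes "finite F" and "card F < CARD('n)"
  shows "\<exists>y. y \<noteq> 0 \<and> (\<forall>j\<in>F. cinner (u j) y = 0)"
proof -
  \<comment> \<open>Orthogonality for the complex form is real orthogonality to both \<open>u j\<close> and \<open>\<i> u j\<close>.\<close>
  define S where "S = u ` F \<union> (\<lambda>j. \<i> *s u j) ` F"
  have "finite S"
    using assms by (simp add: S_def)
  have "card S \<le> card F + card F"
    unfolding S_def by (intro card_Un_le[THEN order_trans] add_mono card_image_le assms)
  then have "dim S < DIM(complex^'n)"
    using dim_le_card'[OF \<open>finite S\<close>] assms by simp
  then obtain y where y: "y \<noteq> 0" "\<And>z. z \<in> span S \<Longrightarrow> orthogonal y z"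
    using orthogonal_to_subspace_exists by blast
  have "cinner (u j) y = 0" if "j \<in> F" for j
  proof -
    have "inner y (u j) = 0" "inner y (\<i> *s u j) = 0"
      using y(2)[of "u j"] y(2)[of "\<i> *s u j"] that by (auto simp: S_def orthogonal_def span_base)
    then have "Re (cinner y (u j)) = 0" "Im (cinner y (u j)) = 0"
      using Re_cinner[of y "\<i> *s u j"] by (auto simp: Re_cinner cinner_scale_right)
    then show ?thesis
      by (metis cinner_commute complex_cnj_zero complex_eq_iff zero_complex.sel)
  qed
  with y show ?thesis by blast
qed

lemma orthonormal_on_extend:
  fixes v :: "'n \<Rightarrow> complex^'n"
  assumes "orthonormal_on J v"
  shows "\<exists>w. orthonormal_on UNIV w \<and> (\<forall>j\<in>J. w j = v j)"
proof -
  have "\<exists>w. orthonormal_on (J \<union> F) w \<and> (\<forall>j\<in>J. w j = v j)"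
    if "finite F" and "F \<inter> J = {}" for F
    using that
  proof (induction F rule: finite_induct)
    case empty
    then show ?case using assms by auto
  next
    case (insert a F)
    then obtain w where w: "orthonormal_on (J \<union> F) w" "\<forall>j\<in>J. w j = v j"
      by auto
    have "J \<union> F \<subset> UNIV"
      using insert by auto
    then have "card (J \<union> F) < CARD('n)"
      by (simp add: psubset_card_mono)
    then obtain y where y: "y \<noteq> 0" "\<forall>j\<in>J \<union> F. cinner (w j) y = 0"
      using exists_orthogonal_vector[of "J \<union> F" w] by auto
    define x where "x = (1 / norm y) *\<^sub>R y"
    have "cinner x x = 1"
      using y by (simp add: x_def cinner_self_eq_1_iff)
    moreover have "cinner (w j) x = 0" "cinner x (w j) = 0" if "j \<in> J \<union> F" for j
      using y that cinner_commute[of x "w j"] by (auto simp: x_def scaleR_cvec cinner_scale_right)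
    ultimately have "orthonormal_on (J \<union> insert a F) (w(a := x))"
      using w(1) insert unfolding orthonormal_on_def by auto
    then show ?case
      using w(2) insert by auto
  qed
  from this[of "UNIV - J"] show ?thesis
    by auto
qed

definition mat_of_cols :: "('n \<Rightarrow> complex^'n) \<Rightarrow> complex^'n^'n" where
  "mat_of_cols u = (\<chi> a j. u j $ a)"

lemma matrix_mult_mat_of_cols_nth: "(M ** mat_of_cols u) $ a $ j = (M *v u j) $ a"
  by (simp add: mat_of_cols_def matrix_matrix_mult_def matrix_vector_mult_def)

lemma mat_of_cols_axis: "mat_of_cols u *v axis j 1 = u j"
  by (simp add: mat_of_cols_def matrix_vector_mult_def vec_eq_iff axis_def
      if_distrib[of "\<lambda>a. _ * a"] cong: if_cong)

lemma adj_mat_of_cols_mult: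
  "orthonormal_on UNIV u \<Longrightarrow> cadj (mat_of_cols u) ** mat_of_cols u = mat 1"
  by (simp add: orthonormal_on_def mat_of_cols_def cadj_def matrix_matrix_mult_def mat_def
      vec_eq_iff cinner_def)

lemma mat_of_cols_mult_adj:
  "orthonormal_on UNIV u \<Longrightarrow> mat_of_cols u ** cadj (mat_of_cols u) = mat 1"
  using adj_mat_of_cols_mult matrix_left_right_inverse by blast

lemma adj_mat_of_cols_vector:
  "orthonormal_on UNIV u \<Longrightarrow> cadj (mat_of_cols u) *v u j = axis j 1"
  by (metis adj_mat_of_cols_mult mat_of_cols_axis matrix_vector_mul_assoc matrix_vector_mul_lid)

lemma matrix_eq_on_orthonormal_basis:
  fixes u :: "'n \<Rightarrow> complex^'n"
  assumes "orthonormal_on UNIV u" and "\<And>j. M *v u j = N *v u j"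
  shows "M = N"
proof -
  have "M ** mat_of_cols u = N ** mat_of_cols u"
    using assms(2) by (simp add: vec_eq_iff matrix_mult_mat_of_cols_nth)
  then have "M ** mat_of_cols u ** cadj (mat_of_cols u) = N ** mat_of_cols u ** cadj (mat_of_cols u)"
    by simp
  then show ?thesis
    by (simp add: matrix_mul_assoc[symmetric] mat_of_cols_mult_adj[OF assms(1)])
qed

lemma trace_orthonormal_basis:
  fixes u :: "'n \<Rightarrow> complex^'n"
  assumes "orthonormal_on UNIV u"
  shows "trace M = (\<Sum>j\<in>UNIV. cinner (u j) (M *v u j))"
proof -
  let ?U = "mat_of_cols u"
  have "trace M = trace ((M ** ?U) ** cadj ?U)"
    by (simp add: matrix_mul_assoc[symmetric] mat_of_cols_mult_adj[OF assms])
  also have "\<dots> = trace (cadj ?U ** (M ** ?U))"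
    by (rule trace_mul_sym)
  also have "\<dots> = (\<Sum>j\<in>UNIV. cinner (u j) (M *v u j))"
    by (simp add: trace_def matrix_matrix_mult_def matrix_mult_mat_of_cols_nth cadj_def
        mat_of_cols_def cinner_def matrix_vector_mult_def)
  finally show ?thesis .
qed

section \<open>The spectral theorem for normal matrices\<close>

definition csubspace :: "(complex^'n) set \<Rightarrow> bool" where
  "csubspace S \<longleftrightarrow> 0 \<in> S \<and> (\<forall>x\<in>S. \<forall>y\<in>S. x + y \<in> S) \<and> (\<forall>c x. x \<in> S \<longrightarrow> c *s x \<in> S)"

lemma csubspace_subspace: "csubspace S \<Longrightarrow> subspace S"
  by (simp add: csubspace_def subspace_def scaleR_cvec)

lemma csubspace_diff: "csubspace S \<Longrightarrow> x \<in> S \<Longrightarrow> y \<in> S \<Longrightarrow> x - y \<in> S"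
  unfolding csubspace_def by (metis diff_conv_add_uminus vector_sneg_minus1)

lemma csubspace_orthogonal: "csubspace {y. \<forall>j\<in>F. cinner (u j) y = 0}"
  by (simp add: csubspace_def cinner_add_right cinner_scale_right)

lemma nonneg_quadratic_linear_coeff_zero:
  fixes b c :: real
  assumes "\<And>t. 0 \<le> 2*t*b + t\<^sup>2*c" and "0 \<le> c"
  shows "b = 0"
proof -
  define t where "t = -b/(c+1)"
  have t: "t * (c+1) = -b"
    using assms(2) by (simp add: t_def)
  have "0 \<le> (2*t*b + t\<^sup>2*c) * (c+1)\<^sup>2"
    using assms by simp
  also have "\<dots> = 2*b*(c+1)*(t*(c+1)) + c*(t*(c+1))\<^sup>2"
    by (simp add: power2_eq_square algebra_simps)
  also have "\<dots> = - b\<^sup>2 * (c+2)"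
    unfolding t by (simp add: power2_eq_square algebra_simps)
  finally show ?thesis
    using assms(2) by (simp add: mult_le_0_iff)
qed

text \<open>The real quadratic \<open>t \<mapsto> Re \<langle>x + t w, D (x + t w)\<rangle>\<close> is nonnegative and vanishes at
  \<open>t = 0\<close>, so its linear coefficient \<open>2 Re \<langle>w, D x\<rangle>\<close> vanishes.\<close>

lemma nonneg_form_null_vector:
  assumes S: "csubspace S" and D: "cadj D = D"
    and pos: "\<And>z. z \<in> S \<Longrightarrow> 0 \<le> Re (cinner z (D *v z))"
    and x: "x \<in> S" "Re (cinner x (D *v x)) = 0" and y: "y \<in> S"
  shows "cinner y (D *v x) = 0"
proof -
  have Re_zero: "Re (cinner w (D *v x)) = 0" if w: "w \<in> S" for w
  proof -
    have adj: "cinner x (D *v w) = cnj (cinner w (D *v x))"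
      by (metis D cinner_adj_right cinner_commute)
    have "0 \<le> 2*t*Re (cinner w (D *v x)) + t\<^sup>2 * Re (cinner w (D *v w))" for t :: real
    proof -
      let ?z = "x + complex_of_real t *s w"
      have "?z \<in> S"
        using S x w by (simp add: csubspace_def)
      moreover have "cinner ?z (D *v ?z) = cinner x (D *v x) + of_real t * cinner x (D *v w)
          + of_real t * cinner w (D *v x) + of_real t * of_real t * cinner w (D *v w)"
        by (simp add: vec.add vec.scale cinner_add_left cinner_add_right cinner_scale_left
            cinner_scale_right algebra_simps)
      ultimately show ?thesis
        using pos[of ?z] x(2) by (simp add: adj power2_eq_square)
    qed
    then show ?thesis
      by (rule nonneg_quadratic_linear_coeff_zero) (rule pos[OF w])
  qed
  have "\<i> *s y \<in> S"
    using S y by (simp add: csubspace_def)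
  then have "Im (cinner y (D *v x)) = 0"
    using Re_zero by (fastforce simp: cinner_scale_left)
  then show ?thesis
    using Re_zero[OF y] by (simp add: complex_eq_iff)
qed

lemma quadratic_form_max_on_subspace:
  fixes H :: "complex^'n^'n"
  assumes S: "csubspace S" and "x0 \<in> S" "x0 \<noteq> 0"
  obtains x where "x \<in> S" "norm x = 1"
    and "\<And>z. z \<in> S \<Longrightarrow> Re (cinner z (H *v z)) \<le> Re (cinner x (H *v x)) * (norm z)\<^sup>2"
proof -
  define f where "f x = Re (cinner x (H *v x))" for x
  define K where "K = S \<inter> sphere 0 1"
  have "compact K"
    unfolding K_def using S
    by (intro closed_Int_compact compact_sphere closed_subspace csubspace_subspace)
  have unit: "(1 / norm z) *\<^sub>R z \<in> K" if "z \<in> S" "z \<noteq> 0" for z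
  proof -
    have "(1 / norm z) *\<^sub>R z \<in> S"
      using that S by (simp add: scaleR_cvec csubspace_def)
    then show ?thesis
      using that(2) by (simp add: K_def)
  qed
  then have "K \<noteq> {}"
    using assms(2,3) by blast
  have "continuous_on K f"
    unfolding f_def cinner_def matrix_vector_mult_def by (intro continuous_intros)
  then obtain x where "x \<in> K" and xmax: "\<And>y. y \<in> K \<Longrightarrow> f y \<le> f x"
    using continuous_attains_sup[OF \<open>compact K\<close> \<open>K \<noteq> {}\<close>] by blast
  have "f z \<le> f x * (norm z)\<^sup>2" if "z \<in> S" for z
  proof (cases "z = 0")
    case True
    then show ?thesis by (simp add: f_def)
  next
    case False
    have "f ((1 / norm z) *\<^sub>R z) = f z / (norm z)\<^sup>2"
      by (simp add: f_def scaleR_cvec vec.scale cinner_scale_left cinner_scale_right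
          power2_eq_square)
    then have "f z = (norm z)\<^sup>2 * f ((1 / norm z) *\<^sub>R z)"
      using False by simp
    also have "\<dots> \<le> (norm z)\<^sup>2 * f x"
      using xmax[OF unit[OF that False]] by (simp add: mult_left_mono)
    finally show ?thesis
      by (simp add: mult.commute)
  qed
  with \<open>x \<in> K\<close> that show ?thesis
    by (auto simp: K_def f_def)
qed

text \<open>With \<open>l\<close> the maximum of \<open>\<langle>x, H x\<rangle>\<close> on the unit sphere of \<open>S\<close>, the form of \<open>l - H\<close> is
  positive semidefinite on \<open>S\<close> and null at the maximiser.\<close>

lemma hermitian_eigenvector_in_subspace:
  fixes H :: "complex^'n^'n"
  assumes S: "csubspace S" and "x0 \<in> S" "x0 \<noteq> 0" and H: "cadj H = H"
    and inv: "\<And>x. x \<in> S \<Longrightarrow> H *v x \<in> S"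
  shows "\<exists>x\<in>S. norm x = 1 \<and> (\<exists>l::real. H *v x = complex_of_real l *s x)"
proof -
  obtain x where x: "x \<in> S" "norm x = 1"
    and max: "\<And>z. z \<in> S \<Longrightarrow> Re (cinner z (H *v z)) \<le> Re (cinner x (H *v x)) * (norm z)\<^sup>2"
    using quadratic_form_max_on_subspace[OF assms(1-3)] by blast
  define l where "l = Re (cinner x (H *v x))"
  define D where "D = mat (complex_of_real l) - H"
  have Dv: "D *v z = complex_of_real l *s z - H *v z" for z
    by (simp add: D_def matrix_vector_mult_diff_rdistrib mat_vector_mult)
  have Dq: "Re (cinner z (D *v z)) = l * (norm z)\<^sup>2 - Re (cinner z (H *v z))" for z
    by (simp add: Dv cinner_diff_right cinner_scale_right cinner_self)
  have "D *v x \<in> S"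
    unfolding Dv using S x inv by (intro csubspace_diff) (auto simp: csubspace_def)
  moreover have "cadj D = D"
    by (simp add: D_def cadj_diff H)
  ultimately have "cinner (D *v x) (D *v x) = 0"
    using max Dq x by (intro nonneg_form_null_vector[OF S]) (auto simp: l_def)
  then have "H *v x = complex_of_real l *s x"
    by (simp add: Dv)
  with x show ?thesis
    by blast
qed

definition mat_cscale :: "complex \<Rightarrow> complex^'n^'m \<Rightarrow> complex^'n^'m" where
  "mat_cscale c A = (\<chi> i j. c * A$i$j)"

lemma mat_cscale_vector: "mat_cscale c A *v x = c *s (A *v x)"
  by (simp add: mat_cscale_def vec_eq_iff matrix_vector_mult_def sum_distrib_left mult.assoc)

lemma normal_adj_eigenvector:
  assumes N: "W ** cadj W = cadj W ** W" and e: "W *v u = \<mu> *s u"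
  shows "cadj W *v u = cnj \<mu> *s u"
proof -
  define n where "n = cinner u u"
  have "cinner (cadj W *v u) (cadj W *v u) = cinner u ((W ** cadj W) *v u)"
    by (simp add: cinner_adj_left matrix_vector_mul_assoc)
  also have "\<dots> = cinner (W *v u) (W *v u)"
    by (simp add: N cinner_adj_left matrix_vector_mul_assoc)
  finally have 1: "cinner (cadj W *v u) (cadj W *v u) = \<mu> * cnj \<mu> * n"
    by (simp add: e cinner_scale_left cinner_scale_right n_def)
  have 2: "cinner (cadj W *v u) u = \<mu> * n"
    by (simp add: cinner_adj_left e cinner_scale_right n_def)
  have 3: "cinner u (cadj W *v u) = cnj \<mu> * n"
    by (simp add: cinner_adj_right e cinner_scale_left n_def)
  have "cinner (cadj W *v u - cnj \<mu> *s u) (cadj W *v u - cnj \<mu> *s u) = 0"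
    by (simp only: cinner_diff_left cinner_diff_right cinner_scale_left cinner_scale_right
        1 2 3 complex_cnj_cnj flip: n_def) (simp add: algebra_simps)
  then show ?thesis
    by simp
qed

text \<open>Reduce to the commuting Hermitian parts \<open>W + W\<^sup>*\<close> and \<open>\<i>(W\<^sup>* - W)\<close>: the eigenspace of
  the first is invariant under \<open>W\<close> and \<open>W\<^sup>*\<close>, hence contains an eigenvector of the second.\<close>

lemma normal_eigenvector_in_subspace:
  fixes W :: "complex^'n^'n"
  assumes N: "W ** cadj W = cadj W ** W" and S: "csubspace S" and x0: "x0 \<in> S" "x0 \<noteq> 0"
    and inv: "\<And>x. x \<in> S \<Longrightarrow> W *v x \<in> S" and inv_adj: "\<And>x. x \<in> S \<Longrightarrow> cadj W *v x \<in> S"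
  shows "\<exists>x\<in>S. norm x = 1 \<and> (\<exists>\<mu>. W *v x = \<mu> *s x)"
proof -
  define H1 where "H1 = W + cadj W"
  define H2 where "H2 = mat_cscale \<i> (cadj W - W)"
  have H1v: "H1 *v y = W *v y + cadj W *v y" for y
    by (simp add: H1_def matrix_vector_mult_add_rdistrib)
  have H2v: "H2 *v y = \<i> *s (cadj W *v y - W *v y)" for y
    by (simp add: H2_def mat_cscale_vector matrix_vector_mult_diff_rdistrib)
  have "cadj H1 = H1"
    by (simp add: H1_def cadj_add add.commute)
  moreover have "H1 *v y \<in> S" if "y \<in> S" for y
    using S that inv inv_adj by (simp add: H1v csubspace_def)
  ultimately obtain x1 l1 where x1: "x1 \<in> S" "norm x1 = 1" "H1 *v x1 = complex_of_real l1 *s x1"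
    using hermitian_eigenvector_in_subspace[OF S x0] by blast
  define E where "E = {y\<in>S. H1 *v y = complex_of_real l1 *s y}"
  have E: "csubspace E"
    using S by (auto simp: csubspace_def E_def vec.add vec.scale vec_eq_iff algebra_simps)
  have comm: "W *v (cadj W *v y) = cadj W *v (W *v y)" for y
    by (simp add: matrix_vector_mul_assoc N)
  have "H1 *v (W *v y) = W *v (H1 *v y)" "H1 *v (cadj W *v y) = cadj W *v (H1 *v y)" for y
    by (simp_all add: H1v vec.add comm)
  then have WE: "W *v y \<in> E" "cadj W *v y \<in> E" if "y \<in> E" for y
    using that by (auto simp: E_def inv inv_adj vec.scale)
  have "cadj H2 = H2"
    by (simp add: H2_def mat_cscale_def cadj_def vec_eq_iff algebra_simps)
  moreover have "H2 *v y \<in> E" if "y \<in> E" for y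
    using E WE[OF that] unfolding H2v by (simp add: csubspace_diff csubspace_def)
  moreover have "x1 \<in> E" "x1 \<noteq> 0"
    using x1 by (auto simp: E_def)
  ultimately obtain x l2 where x: "x \<in> E" "norm x = 1" "H2 *v x = complex_of_real l2 *s x"
    using hermitian_eigenvector_in_subspace[OF E] by blast
  have "2 *s (W *v x) = H1 *v x + \<i> *s (H2 *v x)"
    by (simp add: H1v H2v vec_eq_iff algebra_simps)
  also have "\<dots> = (complex_of_real l1 + \<i> * complex_of_real l2) *s x"
    using x by (simp add: E_def vec_eq_iff algebra_simps)
  finally have "W *v x = ((complex_of_real l1 + \<i> * complex_of_real l2) / 2) *s x"
    by (simp add: vec_eq_iff field_simps)
  with x show ?thesis
    by (auto simp: E_def)
qed

theorem normal_orthonormal_eigenbasis: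
  fixes W :: "complex^'n^'n"
  assumes N: "W ** cadj W = cadj W ** W"
  shows "\<exists>(u::'n \<Rightarrow> complex^'n) \<mu>. orthonormal_on UNIV u \<and> (\<forall>j. W *v u j = \<mu> j *s u j)"
proof -
  have "\<exists>u \<mu>. orthonormal_on F u \<and> (\<forall>j\<in>F. W *v u j = \<mu> j *s u j)" for F :: "'n set"
    using finite[of F]
  proof (induction F rule: finite_induct)
    case empty
    then show ?case
      by (simp add: orthonormal_on_def)
  next
    case (insert a F)
    then obtain u \<mu> where u: "orthonormal_on F u" and ev: "\<forall>j\<in>F. W *v u j = \<mu> j *s u j"
      by blast
    have "F \<subset> UNIV"
      using insert by auto
    define S where "S = {y. \<forall>j\<in>F. cinner (u j) y = 0}"
    obtain y where "y \<in> S" "y \<noteq> 0"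
      using exists_orthogonal_vector[of F u] \<open>F \<subset> UNIV\<close>
      by (auto simp: S_def psubset_card_mono)
    have adj_ev: "cadj W *v u j = cnj (\<mu> j) *s u j" if "j \<in> F" for j
      using normal_adj_eigenvector[OF N] ev that by blast
    have "W *v z \<in> S" "cadj W *v z \<in> S" if "z \<in> S" for z
      using that ev adj_ev
      by (auto simp: S_def cinner_adj_right cinner_scale_left)
    then obtain x m where x: "x \<in> S" "norm x = 1" "W *v x = m *s x"
      using normal_eigenvector_in_subspace[OF N _ \<open>y \<in> S\<close> \<open>y \<noteq> 0\<close>] csubspace_orthogonal
      unfolding S_def by blast
    have "cinner (u j) x = 0" "cinner x (u j) = 0" if "j \<in> F" for j
      using x(1) that cinner_commute[of x "u j"] by (auto simp: S_def)
    then have "orthonormal_on (insert a F) (u(a := x))"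
      using u x(2) insert(2) unfolding orthonormal_on_def by (auto simp: cinner_self_eq_1_iff)
    moreover have "\<forall>j\<in>insert a F. W *v (u(a := x)) j = (\<mu>(a := m)) j *s (u(a := x)) j"
      using ev x insert(2) by auto
    ultimately show ?case
      by blast
  qed
  from this[of UNIV] show ?thesis
    by auto
qed

section \<open>The trace norm\<close>

definition cdiag :: "('n \<Rightarrow> complex) \<Rightarrow> complex^'n^'n" where
  "cdiag s = (\<chi> i j. if i = j then s i else 0)"

lemma cdiag_vector: "cdiag s *v y = (\<chi> i. s i * y $ i)"
  by (simp add: cdiag_def matrix_vector_mult_def vec_eq_iff if_distrib[of "\<lambda>a. a * _"]
      cong: if_cong)

lemma cadj_cdiag: "cadj (cdiag s) = cdiag (\<lambda>i. cnj (s i))"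
  by (simp add: cadj_def cdiag_def vec_eq_iff)

lemma trace_cdiag: "trace (cdiag s) = sum s UNIV"
  by (simp add: trace_def cdiag_def)

lemma cdiag_axis: "cdiag s *v axis k 1 = s k *s axis k 1"
  by (simp add: cdiag_vector vec_eq_iff axis_def)

lemma cinner_cdiag_of_real:
  "cinner y (cdiag (\<lambda>i. complex_of_real (s i)) *v y) = complex_of_real (\<Sum>i\<in>UNIV. s i * (cmod (y$i))\<^sup>2)"
proof -
  have summand: "cnj z * (complex_of_real r * z) = complex_of_real (r * (cmod z)\<^sup>2)" for z r
    by (simp only: of_real_mult complex_norm_square) (simp add: mult_ac)
  show ?thesis
    by (simp add: cdiag_vector cinner_def summand del: of_real_mult)
qed

lemma adj_mult_eigenvalue:
  assumes "(cadj A ** A) *v u = \<mu> *s u" and "norm u = 1"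
  shows "\<mu> = complex_of_real ((norm (A *v u))\<^sup>2)"
proof -
  have "\<mu> = cinner u ((cadj A ** A) *v u)"
    using assms by (simp add: cinner_scale_right cinner_self_eq_1_iff[symmetric])
  also have "\<dots> = complex_of_real ((norm (A *v u))\<^sup>2)"
    by (simp flip: matrix_vector_mul_assoc add: cinner_adj_right cinner_self)
  finally show ?thesis .
qed

lemma psd_sqrt_on_eigenvector:
  assumes "psd Q" and QQ: "Q *v (Q *v u) = complex_of_real (s\<^sup>2) *s u" and "0 \<le> s"
  shows "Q *v u = complex_of_real s *s u"
proof -
  have Q: "cadj Q = Q" "\<And>x. 0 \<le> Re (cinner x (Q *v x))"
    using assms(1) by (auto simp: psd_def)
  show ?thesis
  proof (cases "s = 0")
    case True
    have "cinner (Q *v u) (Q *v u) = cinner u (Q *v (Q *v u))"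
      by (simp add: cinner_adj_left Q)
    with QQ True show ?thesis
      by simp
  next
    case False
    define w where "w = Q *v u - complex_of_real s *s u"
    have "Q *v w = (- complex_of_real s) *s w"
      by (simp add: w_def matrix_vector_mult_diff_distrib vec.scale QQ vec_eq_iff
          power2_eq_square algebra_simps)
    then have "Re (cinner w (Q *v w)) = - s * (norm w)\<^sup>2"
      by (simp add: cinner_minus_right cinner_scale_right cinner_self)
    then have "s * (norm w)\<^sup>2 \<le> 0"
      using Q(2)[of w] by simp
    with False \<open>0 \<le> s\<close> have "w = 0"
      by (simp add: mult_le_0_iff)
    then show ?thesis
      by (simp add: w_def)
  qed
qed

lemma psd_conj_cdiag:
  assumes "\<And>j. 0 \<le> s j"
  shows "psd (U ** cdiag (\<lambda>j. complex_of_real (s j)) ** cadj U)"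
proof -
  let ?D = "cdiag (\<lambda>j. complex_of_real (s j))"
  have "cadj (U ** ?D ** cadj U) = U ** ?D ** cadj U"
    by (simp add: cadj_mult cadj_cdiag matrix_mul_assoc)
  moreover have "cinner x ((U ** ?D ** cadj U) *v x) = cinner (cadj U *v x) (?D *v (cadj U *v x))" for x
    by (simp flip: matrix_vector_mul_assoc add: cinner_adj_right)
  ultimately show ?thesis
    unfolding psd_def using assms by (auto simp: cinner_cdiag_of_real intro!: sum_nonneg)
qed

text \<open>The right-hand side is a positive square root of \<open>A\<^sup>* A\<close>, and it is the only one.\<close>

lemma mabs_eq_diag:
  fixes u :: "'n \<Rightarrow> complex^'n"
  assumes u: "orthonormal_on UNIV u" and ev: "\<And>j. (cadj A ** A) *v u j = \<mu> j *s u j"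
  shows "mabs A = mat_of_cols u ** cdiag (\<lambda>j. complex_of_real (norm (A *v u j))) ** cadj (mat_of_cols u)"
    (is "_ = ?P")
proof -
  let ?U = "mat_of_cols u" and ?s = "\<lambda>j. norm (A *v u j)"
  have Hu: "(cadj A ** A) *v u j = complex_of_real ((?s j)\<^sup>2) *s u j" for j
    using ev adj_mult_eigenvalue[OF ev orthonormal_on_norm[OF u]] by simp
  have Pu: "?P *v u j = complex_of_real (?s j) *s u j" for j
  proof -
    have "?P *v u j = ?U *v (cdiag (\<lambda>j. complex_of_real (?s j)) *v (cadj ?U *v u j))"
      by (simp add: matrix_vector_mul_assoc matrix_mul_assoc)
    then show ?thesis
      by (simp add: adj_mat_of_cols_vector[OF u] cdiag_axis vec.scale mat_of_cols_axis)
  qed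
  have "psd ?P"
    by (rule psd_conj_cdiag) simp
  moreover have "?P ** ?P = cadj A ** A"
  proof (rule matrix_eq_on_orthonormal_basis[OF u])
    fix j
    have "(?P ** ?P) *v u j = ?P *v (?P *v u j)"
      by (simp only: matrix_vector_mul_assoc)
    then show "(?P ** ?P) *v u j = (cadj A ** A) *v u j"
      by (simp only: Pu vec.scale Hu vector_smult_assoc) (simp add: power2_eq_square)
  qed
  moreover have "Q = ?P" if "psd Q" "Q ** Q = cadj A ** A" for Q
    using u
  proof (rule matrix_eq_on_orthonormal_basis)
    fix j
    have "Q *v (Q *v u j) = complex_of_real ((?s j)\<^sup>2) *s u j"
      using that(2) Hu by (simp only: matrix_vector_mul_assoc)
    then show "Q *v u j = ?P *v u j"
      unfolding Pu by (rule psd_sqrt_on_eigenvector[OF \<open>psd Q\<close> _ norm_ge_zero])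
  qed
  ultimately show ?thesis
    unfolding mabs_def by (intro the_equality) blast+
qed

lemma adj_mult_orthonormal_eigenbasis:
  fixes A :: "complex^'n^'n"
  obtains u \<mu> where "orthonormal_on UNIV u"
    and "\<And>j. (cadj A ** A) *v u j = \<mu> j *s u j"
proof -
  have "cadj (cadj A ** A) = cadj A ** A"
    by (simp add: cadj_mult)
  then obtain u \<mu> where "orthonormal_on UNIV u" "\<forall>j. (cadj A ** A) *v u j = \<mu> j *s u j"
    using normal_orthonormal_eigenbasis[of "cadj A ** A"] by auto
  then show ?thesis
    using that by blast
qed

lemma trace_norm_eq_sum_norm:
  fixes u :: "'n \<Rightarrow> complex^'n"
  assumes u: "orthonormal_on UNIV u" and ev: "\<And>j. (cadj A ** A) *v u j = \<mu> j *s u j"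
  shows "trace_norm A = (\<Sum>j\<in>UNIV. norm (A *v u j))"
proof -
  let ?U = "mat_of_cols u" and ?D = "cdiag (\<lambda>j. complex_of_real (norm (A *v u j)))"
  have "trace (mabs A) = trace (cadj ?U ** (?U ** ?D))"
    unfolding mabs_eq_diag[OF u ev] by (rule trace_mul_sym)
  also have "\<dots> = trace ?D"
    by (simp add: matrix_mul_assoc adj_mat_of_cols_mult[OF u])
  finally show ?thesis
    by (simp add: trace_norm_def trace_cdiag)
qed

lemma singular_vectors:
  fixes u :: "'n \<Rightarrow> complex^'n"
  assumes u: "orthonormal_on UNIV u" and ev: "\<And>j. (cadj A ** A) *v u j = \<mu> j *s u j"
  obtains V where "orthonormal_on UNIV V" and "\<And>j. A *v u j = complex_of_real (norm (A *v u j)) *s V j"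
proof -
  define s where "s j = norm (A *v u j)" for j
  have "cinner (A *v u i) (A *v u j) = \<mu> j * cinner (u i) (u j)" for i j
    by (simp add: ev cinner_adj_left matrix_vector_mul_assoc cinner_scale_right)
  then have Au_Au: "cinner (A *v u i) (A *v u j) = (if i = j then complex_of_real ((s j)\<^sup>2) else 0)" for i j
    using u adj_mult_eigenvalue[OF ev orthonormal_on_norm[OF u]]
    by (simp add: orthonormal_on_def s_def)
  define J where "J = {j. s j \<noteq> 0}"
  have "orthonormal_on J (\<lambda>j. complex_of_real (1 / s j) *s (A *v u j))"
    by (simp add: orthonormal_on_def J_def cinner_scale_left cinner_scale_right Au_Au power2_eq_square)
  then obtain V where V: "orthonormal_on UNIV V"
    and VJ: "\<And>j. j \<in> J \<Longrightarrow> V j = complex_of_real (1 / s j) *s (A *v u j)"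
    using orthonormal_on_extend by blast
  have "A *v u j = complex_of_real (s j) *s V j" for j
    by (cases "j \<in> J") (auto simp: VJ vec_eq_iff J_def s_def)
  with V that show ?thesis
    unfolding s_def by blast
qed

text \<open>Polar decomposition: \<open>U A = |A|\<close> for some unitary \<open>U\<close>.\<close>

lemma unitary_trace_eq_trace_norm:
  fixes A :: "complex^'n^'n"
  obtains U where "cadj U ** U = mat 1" and "trace (U ** A) = complex_of_real (trace_norm A)"
proof -
  obtain u \<mu> where u: "orthonormal_on UNIV u" and ev: "\<And>j. (cadj A ** A) *v u j = \<mu> j *s u j"
    using adj_mult_orthonormal_eigenbasis by blast
  obtain V where V: "orthonormal_on UNIV V"
    and Au: "\<And>j. A *v u j = complex_of_real (norm (A *v u j)) *s V j"
    using singular_vectors[OF u ev] by blast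
  define s where "s j = norm (A *v u j)" for j
  have As: "A *v u j = complex_of_real (s j) *s V j" for j
    unfolding s_def by (rule Au)
  define U where "U = mat_of_cols u ** cadj (mat_of_cols V)"
  have "cadj U ** U = mat_of_cols V ** (cadj (mat_of_cols u) ** mat_of_cols u) ** cadj (mat_of_cols V)"
    by (simp add: U_def cadj_mult matrix_mul_assoc)
  then have "cadj U ** U = mat 1"
    by (simp add: adj_mat_of_cols_mult[OF u] mat_of_cols_mult_adj[OF V])
  moreover have "(U ** A) *v u j = complex_of_real (s j) *s u j" for j
    by (simp flip: matrix_vector_mul_assoc add: U_def As vec.scale adj_mat_of_cols_vector[OF V]
        mat_of_cols_axis)
  then have "trace (U ** A) = complex_of_real (trace_norm A)"
    using u by (simp add: trace_orthonormal_basis[OF u] trace_norm_eq_sum_norm[OF u ev] s_def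
        cinner_scale_right orthonormal_on_def)
  ultimately show ?thesis
    using that by blast
qed

lemma trace_norm_nonneg: "0 \<le> trace_norm A"
proof -
  obtain u \<mu> where u: "orthonormal_on UNIV u" and ev: "\<And>j. (cadj A ** A) *v u j = \<mu> j *s u j"
    using adj_mult_orthonormal_eigenbasis by blast
  show ?thesis
    unfolding trace_norm_eq_sum_norm[OF u ev] by (intro sum_nonneg norm_ge_zero)
qed

section \<open>The numerical radius\<close>

lemma exists_unit_vector: "\<exists>x::complex^'n. norm x = 1"
  using orthonormal_on_norm[OF orthonormal_on_axis] by blast

lemma bdd_above_numrad: "bdd_above ((\<lambda>x. cmod (cinner x (A *v x))) ` {x::complex^'n. norm x = 1})"
proof -
  obtain K where K: "\<And>x. norm (A *v x) \<le> norm x * K"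
    using bounded_linear.pos_bounded[OF matrix_vector_mul_bounded_linear] by blast
  have "cmod (cinner x (A *v x)) \<le> K" if "norm x = 1" for x
    using cinner_cauchy_schwarz[of x "A *v x"] K[of x] that by simp
  then show ?thesis
    by (intro bdd_aboveI2[where M = K]) simp
qed

lemma cmod_cinner_le_numrad: "norm x = 1 \<Longrightarrow> cmod (cinner x (A *v x)) \<le> numrad A"
  unfolding numrad_def by (rule cSUP_upper) (auto simp: bdd_above_numrad)

lemma numrad_le: "(\<And>x. norm (x::complex^'n) = 1 \<Longrightarrow> cmod (cinner x (A *v x)) \<le> c) \<Longrightarrow> numrad A \<le> c"
  unfolding numrad_def using exists_unit_vector by (intro cSUP_least) auto

lemma numrad_nonneg: "0 \<le> numrad (A::complex^'n^'n)"
proof -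
  obtain x :: "complex^'n" where "norm x = 1"
    using exists_unit_vector by blast
  then show ?thesis
    using cmod_cinner_le_numrad[of x A] norm_ge_zero[of "cinner x (A *v x)"] by linarith
qed

lemma cmod_cinner_le_numrad_norm: "cmod (cinner y (A *v y)) \<le> numrad A * (norm y)\<^sup>2"
proof (cases "y = 0")
  case True
  then show ?thesis by simp
next
  case False
  define x where "x = (1 / norm y) *\<^sub>R y"
  have y: "y = complex_of_real (norm y) *s x"
    using False by (simp add: x_def scaleR_cvec vec_eq_iff)
  have "cinner y (A *v y) = complex_of_real ((norm y)\<^sup>2) * cinner x (A *v x)"
    by (subst (1 2) y) (simp add: vec.scale cinner_scale_left cinner_scale_right power2_eq_square)
  moreover have "norm x = 1"
    using False by (simp add: x_def)
  ultimately show ?thesis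
    using cmod_cinner_le_numrad[of x A]
    by (simp add: norm_mult norm_power mult.commute[of "numrad A"] mult_left_mono)
qed

lemma unitary_trace_le_numrad:
  fixes U A :: "complex^'n^'n"
  assumes U: "cadj U ** U = mat 1"
  shows "cmod (trace (U ** A)) \<le> real CARD('n) * numrad A"
proof -
  have U': "U ** cadj U = mat 1"
    using U matrix_left_right_inverse by blast
  then obtain w \<mu> where w: "orthonormal_on UNIV w" and ev: "\<And>k. cadj U *v w k = \<mu> k *s w k"
    using normal_orthonormal_eigenbasis[of "cadj U"] U by auto
  have ww: "cinner (w k) (w k) = 1" for k
    using w by (simp add: orthonormal_on_def)
  have "cmod (\<mu> k) = 1" for k
  proof -
    have "cnj (\<mu> k) * \<mu> k = cinner (cadj U *v w k) (cadj U *v w k)"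
      by (simp add: ev cinner_scale_left cinner_scale_right ww)
    also have "\<dots> = cinner (w k) ((U ** cadj U) *v w k)"
      by (simp only: cinner_adj_left cadj_cadj matrix_vector_mul_assoc)
    finally show ?thesis
      by (simp add: U' ww cmod_eq_1_iff)
  qed
  have "trace (U ** A) = (\<Sum>k\<in>UNIV. cinner (cadj U *v w k) (A *v w k))"
    by (simp only: trace_orthonormal_basis[OF w] cinner_adj_right matrix_vector_mul_assoc[symmetric])
  also have "\<dots> = (\<Sum>k\<in>UNIV. cnj (\<mu> k) * cinner (w k) (A *v w k))"
    by (simp only: ev cinner_scale_left)
  finally have "cmod (trace (U ** A)) \<le> (\<Sum>k\<in>UNIV. cmod (cnj (\<mu> k) * cinner (w k) (A *v w k)))"
    by (simp only: norm_sum)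
  also have "\<dots> = (\<Sum>k\<in>UNIV. cmod (cinner (w k) (A *v w k)))"
    by (simp add: norm_mult \<open>\<And>k. cmod (\<mu> k) = 1\<close>)
  also have "\<dots> \<le> real CARD('n) * numrad A"
    using sum_bounded_above[of UNIV "\<lambda>k. cmod (cinner (w k) (A *v w k))" "numrad A"]
      cmod_cinner_le_numrad[OF orthonormal_on_norm[OF w]] by simp
  finally show ?thesis .
qed

theorem trace_norm_le_numrad: "trace_norm A \<le> real CARD('n) * numrad (A::complex^'n^'n)"
proof -
  obtain U where "cadj U ** U = mat 1" and "trace (U ** A) = complex_of_real (trace_norm A)"
    using unitary_trace_eq_trace_norm .
  moreover have "0 \<le> trace_norm A"
    by (rule trace_norm_nonneg)
  ultimately show ?thesis
    using unitary_trace_le_numrad[of U A] by simp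
qed

section \<open>The scaled numerical radius is an M-norm\<close>

lemma sum_matrix_vector_mult: "sum f S *v x = (\<Sum>i\<in>S. f i *v (x::'a::comm_semiring_1^'n))"
  by (induct S rule: infinite_finite_induct) (simp_all add: matrix_vector_mult_add_rdistrib)

lemma cinner_quadratic_form_eq_0_imp_zero:
  fixes A :: "complex^'n^'n"
  assumes "\<And>y. cinner y (A *v y) = 0"
  shows "A = 0"
proof -
  have "cinner x (A *v y) = 0" for x y
  proof -
    have polar: "cinner (x + c *s y) (A *v (x + c *s y)) = c * cinner x (A *v y) + cnj c * cinner y (A *v x)" for c
      using assms[of x] assms[of y]
      by (simp add: vec.add vec.scale cinner_add_left cinner_add_right cinner_scale_left
          cinner_scale_right)
    have "cinner x (A *v y) + cinner y (A *v x) = 0"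
      using polar[of 1] assms[of "x + 1 *s y"] by simp
    moreover have "\<i> * cinner x (A *v y) - \<i> * cinner y (A *v x) = 0"
      using polar[of \<i>] assms[of "x + \<i> *s y"] by simp
    ultimately show ?thesis
      by (simp add: algebra_simps)
  qed
  then have "A *v y = 0 *v y" for y
    using cinner_self_eq_0[of "A *v y"] by simp
  then show ?thesis
    by (simp add: matrix_eq)
qed

lemma numrad_eq_0_iff: "numrad (A::complex^'n^'n) = 0 \<longleftrightarrow> A = 0"
proof
  assume "numrad A = 0"
  then show "A = 0"
    using cmod_cinner_le_numrad_norm[of _ A] by (intro cinner_quadratic_form_eq_0_imp_zero) simp
next
  assume "A = 0"
  then show "numrad A = 0"
    using numrad_le[of A 0] numrad_nonneg[of A] by simp
qed

lemma numrad_mat_cscale: "numrad (mat_cscale c (A::complex^'n^'n)) = cmod c * numrad A"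
proof -
  have le: "numrad (mat_cscale c B) \<le> cmod c * numrad B" for c and B :: "complex^'n^'n"
    by (rule numrad_le)
      (simp add: mat_cscale_vector cinner_scale_right norm_mult mult_left_mono cmod_cinner_le_numrad)
  show ?thesis
  proof (cases "c = 0")
    case True
    then show ?thesis
      using le[of 0 A] numrad_nonneg[of "mat_cscale 0 A"] by simp
  next
    case False
    then have "mat_cscale (1/c) (mat_cscale c A) = A"
      by (simp add: mat_cscale_def vec_eq_iff)
    then have "numrad A \<le> numrad (mat_cscale c A) / cmod c"
      using le[of "1/c" "mat_cscale c A"] by (simp add: norm_divide)
    with False le[of c A] show ?thesis
      by (simp add: field_simps)
  qed
qed

lemma numrad_add_le: "numrad ((A::complex^'n^'n) + B) \<le> numrad A + numrad B"
proof (rule numrad_le)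
  fix x :: "complex^'n"
  assume "norm x = 1"
  have "cmod (cinner x ((A + B) *v x)) \<le> cmod (cinner x (A *v x)) + cmod (cinner x (B *v x))"
    by (simp add: matrix_vector_mult_add_rdistrib cinner_add_right norm_triangle_ineq)
  also have "\<dots> \<le> numrad A + numrad B"
    using cmod_cinner_le_numrad[OF \<open>norm x = 1\<close>] by (intro add_mono)
  finally show "cmod (cinner x ((A + B) *v x)) \<le> numrad A + numrad B" .
qed

lemma numrad_compression_le:
  fixes C X :: "'i \<Rightarrow> complex^'n^'n"
  assumes C: "(\<Sum>i\<in>I. cadj (C i) ** C i) = mat 1" and X: "\<And>i. i \<in> I \<Longrightarrow> numrad (X i) \<le> c"
  shows "numrad (\<Sum>i\<in>I. cadj (C i) ** X i ** C i) \<le> c"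
proof (rule numrad_le)
  fix x :: "complex^'n"
  assume "norm x = 1"
  have cinner_compression: "cinner x ((\<Sum>i\<in>I. cadj (C i) ** Y i ** C i) *v x)
      = (\<Sum>i\<in>I. cinner (C i *v x) (Y i *v (C i *v x)))" for Y
    by (simp add: sum_matrix_vector_mult cinner_sum_right cinner_adj_right
        flip: matrix_vector_mul_assoc)
  have "(\<Sum>i\<in>I. complex_of_real ((norm (C i *v x))\<^sup>2)) = 1"
    using cinner_compression[of "\<lambda>_. mat 1"] C \<open>norm x = 1\<close>
    by (simp add: cinner_self cinner_self_eq_1_iff)
  then have "complex_of_real (\<Sum>i\<in>I. (norm (C i *v x))\<^sup>2) = 1"
    by (simp only: of_real_sum)
  then have norms: "(\<Sum>i\<in>I. (norm (C i *v x))\<^sup>2) = 1"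
    by (simp only: of_real_eq_1_iff)
  have "cmod (cinner x ((\<Sum>i\<in>I. cadj (C i) ** X i ** C i) *v x))
      \<le> (\<Sum>i\<in>I. cmod (cinner (C i *v x) (X i *v (C i *v x))))"
    unfolding cinner_compression by (rule norm_sum)
  also have "\<dots> \<le> (\<Sum>i\<in>I. c * (norm (C i *v x))\<^sup>2)"
  proof (rule sum_mono)
    fix i
    assume "i \<in> I"
    have "numrad (X i) * (norm (C i *v x))\<^sup>2 \<le> c * (norm (C i *v x))\<^sup>2"
      using X[OF \<open>i \<in> I\<close>] by (simp add: mult_right_mono)
    then show "cmod (cinner (C i *v x) (X i *v (C i *v x))) \<le> c * (norm (C i *v x))\<^sup>2"
      using cmod_cinner_le_numrad_norm order_trans by blast
  qed
  also have "\<dots> = c"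
    by (simp add: norms flip: sum_distrib_left)
  finally show "cmod (cinner x ((\<Sum>i\<in>I. cadj (C i) ** X i ** C i) *v x)) \<le> c" .
qed

theorem is_M_norm_scaled_numrad: "is_M_norm (\<lambda>A::complex^'n^'n. real CARD('n) * numrad A)"
  unfolding is_M_norm_def is_matrix_norm_def
proof (intro conjI allI impI)
  fix A B :: "complex^'n^'n" and c :: complex
  show "0 \<le> real CARD('n) * numrad A"
    by (simp add: numrad_nonneg)
  show "real CARD('n) * numrad A = 0 \<longleftrightarrow> A = 0"
    by (simp add: numrad_eq_0_iff)
  show "real CARD('n) * numrad (\<chi> i j. c * A $ i $ j) = cmod c * (real CARD('n) * numrad A)"
    using numrad_mat_cscale[of c A] by (simp add: mat_cscale_def)
  show "real CARD('n) * numrad (A + B) \<le> real CARD('n) * numrad A + real CARD('n) * numrad B"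
    using numrad_add_le[of A B] by (simp flip: distrib_left)
next
  fix k :: nat and X C :: "nat \<Rightarrow> complex^'n^'n"
  assume "(\<Sum>i<k. cadj (C i) ** C i) = mat 1"
  moreover have "numrad (X i) \<le> Max ((\<lambda>i. real CARD('n) * numrad (X i)) ` {..<k}) / real CARD('n)"
    if "i < k" for i
    using that Max_ge[of "(\<lambda>i. real CARD('n) * numrad (X i)) ` {..<k}"] by (simp add: field_simps)
  ultimately have "numrad (\<Sum>i<k. cadj (C i) ** X i ** C i)
      \<le> Max ((\<lambda>i. real CARD('n) * numrad (X i)) ` {..<k}) / real CARD('n)"
    by (intro numrad_compression_le) auto
  then show "real CARD('n) * numrad (\<Sum>i<k. cadj (C i) ** X i ** C i)
      \<le> Max ((\<lambda>i. real CARD('n) * numrad (X i)) ` {..<k})"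
    by (simp add: field_simps)
qed

section \<open>Minimality\<close>

definition col_mat :: "'n \<Rightarrow> complex^'n \<Rightarrow> complex^'n^'n" where
  "col_mat j x = (\<chi> a b. if b = j then x$a else 0)"

lemma col_mat_compression_nth:
  "(cadj (col_mat j x) ** Y ** col_mat j x) $ a $ b = (if a = j \<and> b = j then cinner x (Y *v x) else 0)"
proof (cases "a = j \<and> b = j")
  case True
  then have "(cadj (col_mat j x) ** Y ** col_mat j x) $ a $ b
      = (\<Sum>d\<in>UNIV. \<Sum>c\<in>UNIV. cnj (x$c) * (Y$c$d * x$d))"
    by (simp add: matrix_matrix_mult_def cadj_def col_mat_def sum_distrib_right mult.assoc)
  also have "\<dots> = cinner x (Y *v x)"
    by (subst sum.swap) (simp add: cinner_def matrix_vector_mult_def sum_distrib_left)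
  finally show ?thesis
    using True by simp
next
  case False
  then show ?thesis
    by (auto simp: matrix_matrix_mult_def cadj_def col_mat_def)
qed

lemma sum_col_mat_compression:
  "(\<Sum>j\<in>UNIV. cadj (col_mat j x) ** Y ** col_mat j x) = mat (cinner x (Y *v x))"
  by (auto simp: vec_eq_iff sum_component col_mat_compression_nth mat_def intro!: sum.neutral)

lemma trace_norm_mat: "trace_norm (mat c :: complex^'n^'n) = real CARD('n) * cmod c"
proof -
  have "(cadj (mat c) ** mat c) *v axis j 1 = (cnj c * c) *s (axis j 1 :: complex^'n)" for j
    by (simp flip: matrix_vector_mul_assoc add: mat_vector_mult vec.scale vector_smult_assoc)
  then have "trace_norm (mat c :: complex^'n^'n) = (\<Sum>j\<in>UNIV. norm (mat c *v (axis j 1 :: complex^'n)))"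
    by (rule trace_norm_eq_sum_norm[OF orthonormal_on_axis])
  then show ?thesis
    using orthonormal_on_norm[OF orthonormal_on_axis] by (simp add: mat_vector_mult norm_cscale)
qed

theorem scaled_numrad_le_M_norm:
  fixes N :: "complex^'n^'n \<Rightarrow> real"
  assumes N: "is_M_norm N" and trace_norm_le: "\<And>A. trace_norm A \<le> N A"
  shows "real CARD('n) * numrad A \<le> N A"
proof -
  have M: "\<And>(k::nat) X C. (\<Sum>i<k. cadj (C i) ** C i) = mat 1
      \<Longrightarrow> N (\<Sum>i<k. cadj (C i) ** X i ** C i) \<le> Max ((\<lambda>i. N (X i)) ` {..<k})"
    using N unfolding is_M_norm_def by blast
  obtain g where g: "bij_betw g {..<CARD('n)} (UNIV::'n set)"
    using ex_bij_betw_nat_finite[of "UNIV::'n set"] by (auto simp: atLeast0LessThan)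
  have "real CARD('n) * cmod (cinner x (A *v x)) \<le> N A" if "norm x = 1" for x
  proof -
    define C where "C i = col_mat (g i) x" for i
    have compress: "(\<Sum>i<CARD('n). cadj (C i) ** Y ** C i) = mat (cinner x (Y *v x))" for Y
      using sum.reindex_bij_betw[OF g, of "\<lambda>j. cadj (col_mat j x) ** Y ** col_mat j x"]
      by (simp add: C_def sum_col_mat_compression)
    have unit: "(\<Sum>i<CARD('n). cadj (C i) ** C i) = mat 1"
      using compress[of "mat 1"] that by (simp add: cinner_self)
    have "N (mat (cinner x (A *v x))) \<le> Max ((\<lambda>i. N A) ` {..<CARD('n)})"
      using M[OF unit, of "\<lambda>_. A"] compress[of A] by simp
    also have "\<dots> = N A"
      by (simp add: image_constant_conv lessThan_empty_iff)
    finally show ?thesis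
      using trace_norm_le[of "mat (cinner x (A *v x))"] by (simp add: trace_norm_mat)
  qed
  then have "numrad A \<le> N A / real CARD('n)"
    by (intro numrad_le) (simp add: field_simps)
  then show ?thesis
    by (simp add: field_simps)
qed

theorem theorem3p7:
  shows "is_M_norm (\<lambda>A::complex^'n^'n. real CARD('n) * numrad A)
     \<and> (\<forall>A::complex^'n^'n. trace_norm A \<le> real CARD('n) * numrad A)
     \<and> (\<forall>N::complex^'n^'n \<Rightarrow> real. is_M_norm N \<and> (\<forall>A. trace_norm A \<le> N A)
            \<longrightarrow> (\<forall>A. real CARD('n) * numrad A \<le> N A))"
  using is_M_norm_scaled_numrad trace_norm_le_numrad scaled_numrad_le_M_norm by blast

end
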